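(* Let $G$ be a graph of order $n$ having $q\ge 1$ vertices $v_1,\dots,v_q$, each of degree larger than two, such that the distance between any two of them is at least three, and such that the set of vertices not adjacent to (nor equal to) any $v_i$, $i\in\{1,\dots,q\}$, i.e. $V(G)\setminus\bigcup_{i=1}^q N_G[v_i]$, is an independent set. Then $$\gamma_{qtR}(G)\le n+3q-\sum_{i=1}^q (d_G(v_i)+1).$$
   Context: All graphs are finite, simple and undirected; $N_G[v]$ is the closed neighborhood and $d_G(v)$ the degree. For $f:V(G)\to\{0,1,2\}$ write $V_i=\{v:f(v)=i\}$; weight $\omega(f)=|V_1|+2|V_2|$. A quasi-total Roman dominating function (QTRDF) is an $f$ such that every vertex labeled $0$ is adjacent to a vertex labeled $2$, and every vertex isolated in the subgraph induced by $V_1\cup V_2$ has label $1$; $\gamma_{qtR}(G)$ is the minimum weight of a QTRDF. *)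

theory Defs
  imports Main
begin

definition simple_graph :: "'a set \<Rightarrow> ('a \<Rightarrow> 'a \<Rightarrow> bool) \<Rightarrow> bool" where
  "simple_graph V E \<longleftrightarrow> finite V \<and> (\<forall>u w. E u w \<longrightarrow> u \<in> V \<and> w \<in> V)
     \<and> (\<forall>u w. E u w \<longrightarrow> E w u) \<and> (\<forall>u. \<not> E u u)"

definition nbhd :: "'a set \<Rightarrow> ('a \<Rightarrow> 'a \<Rightarrow> bool) \<Rightarrow> 'a \<Rightarrow> 'a set" where
  "nbhd V E v = {u \<in> V. E v u}"

definition closed_nbhd :: "'a set \<Rightarrow> ('a \<Rightarrow> 'a \<Rightarrow> bool) \<Rightarrow> 'a \<Rightarrow> 'a set" where
  "closed_nbhd V E v = insert v (nbhd V E v)"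

definition degree :: "'a set \<Rightarrow> ('a \<Rightarrow> 'a \<Rightarrow> bool) \<Rightarrow> 'a \<Rightarrow> nat" where
  "degree V E v = card (nbhd V E v)"

text \<open>A walk given as a vertex list; its length is the number of edges.\<close>
definition is_walk :: "'a set \<Rightarrow> ('a \<Rightarrow> 'a \<Rightarrow> bool) \<Rightarrow> 'a list \<Rightarrow> bool" where
  "is_walk V E xs \<longleftrightarrow> xs \<noteq> [] \<and> set xs \<subseteq> V \<and> (\<forall>i. Suc i < length xs \<longrightarrow> E (xs ! i) (xs ! Suc i))"

definition dist_ge :: "'a set \<Rightarrow> ('a \<Rightarrow> 'a \<Rightarrow> bool) \<Rightarrow> 'a \<Rightarrow> 'a \<Rightarrow> nat \<Rightarrow> bool" where
  "dist_ge V E u w k \<longleftrightarrow> (\<forall>xs. is_walk V E xs \<and> hd xs = u \<and> last xs = w \<longrightarrow> length xs - 1 \<ge> k)"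

definition independent_set :: "('a \<Rightarrow> 'a \<Rightarrow> bool) \<Rightarrow> 'a set \<Rightarrow> bool" where
  "independent_set E S \<longleftrightarrow> (\<forall>u\<in>S. \<forall>w\<in>S. \<not> E u w)"

definition weight :: "'a set \<Rightarrow> ('a \<Rightarrow> nat) \<Rightarrow> nat" where
  "weight V f = (\<Sum>v\<in>V. f v)"

definition is_QTRDF :: "'a set \<Rightarrow> ('a \<Rightarrow> 'a \<Rightarrow> bool) \<Rightarrow> ('a \<Rightarrow> nat) \<Rightarrow> bool" where
  "is_QTRDF V E f \<longleftrightarrow> (\<forall>v\<in>V. f v \<le> 2)
     \<and> (\<forall>v\<in>V. f v = 0 \<longrightarrow> (\<exists>u\<in>V. E v u \<and> f u = 2))
     \<and> (\<forall>v\<in>V. f v \<ge> 1 \<and> (\<forall>u\<in>V. E v u \<longrightarrow> f u = 0) \<longrightarrow> f v = 1)"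

definition gamma_qtR :: "'a set \<Rightarrow> ('a \<Rightarrow> 'a \<Rightarrow> bool) \<Rightarrow> nat" where
  "gamma_qtR V E = (LEAST w. \<exists>f. is_QTRDF V E f \<and> weight V f = w)"

end

theory Submission
  imports Defs
begin

text \<open>Label each centre \<open>v\<^sub>i\<close> with 2, one chosen neighbour of it with 1, the rest of
  \<open>N[v\<^sub>i]\<close> with 0 and every remaining vertex with 1. The centres are at distance at least
  three, so the closed neighbourhoods are disjoint and each contributes weight 3 instead of
  \<open>d(v\<^sub>i) + 1\<close>. Every 0 has its centre as neighbour, and every 2 has its chosen neighbour
  labelled 1, so this is a quasi-total Roman dominating function.\<close>

lemma simple_graph_sym: "simple_graph V E \<Longrightarrow> E u w \<Longrightarrow> E w u"
  by (simp add: simple_graph_def)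

lemma simple_graph_irrefl: "simple_graph V E \<Longrightarrow> \<not> E u u"
  by (simp add: simple_graph_def)

lemma simple_graph_edge_in: "simple_graph V E \<Longrightarrow> E u w \<Longrightarrow> u \<in> V \<and> w \<in> V"
  by (simp add: simple_graph_def)

lemma is_walk_singleton: "a \<in> V \<Longrightarrow> is_walk V E [a]"
  by (simp add: is_walk_def)

lemma is_walk_edge: "a \<in> V \<Longrightarrow> b \<in> V \<Longrightarrow> E a b \<Longrightarrow> is_walk V E [a, b]"
  by (auto simp: is_walk_def less_Suc_eq)

lemma is_walk_path2:
  "a \<in> V \<Longrightarrow> b \<in> V \<Longrightarrow> c \<in> V \<Longrightarrow> E a b \<Longrightarrow> E b c \<Longrightarrow> is_walk V E [a, b, c]"
  by (auto simp: is_walk_def less_Suc_eq nth_Cons split: nat.split)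

lemma dist_ge_walk_length:
  "dist_ge V E a b k \<Longrightarrow> is_walk V E xs \<Longrightarrow> hd xs = a \<Longrightarrow> last xs = b \<Longrightarrow> k \<le> length xs - 1"
  by (simp add: dist_ge_def)

lemma closed_nbhd_disjoint_if_dist_ge_3:
  assumes g: "simple_graph V E" and a: "a \<in> V" and b: "b \<in> V" and d: "dist_ge V E a b 3"
  shows "closed_nbhd V E a \<inter> closed_nbhd V E b = {}"
proof -
  have "a \<noteq> b"
    using dist_ge_walk_length[OF d is_walk_singleton[OF a]] by auto
  moreover have "\<not> E a b"
    using dist_ge_walk_length[OF d is_walk_edge[OF a b]] by auto
  moreover have "\<not> (E a x \<and> E b x)" for x
  proof
    assume "E a x \<and> E b x"
    then have "is_walk V E [a, x, b]"
      using is_walk_path2 a b simple_graph_edge_in[OF g] simple_graph_sym[OF g] by metis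
    then show False using dist_ge_walk_length[OF d] by fastforce
  qed
  ultimately show ?thesis
    using simple_graph_sym[OF g] by (auto simp: closed_nbhd_def nbhd_def)
qed

lemma card_closed_nbhd:
  assumes "simple_graph V E"
  shows "card (closed_nbhd V E a) = degree V E a + 1"
proof -
  have "finite (nbhd V E a)" using assms by (simp add: simple_graph_def nbhd_def)
  moreover have "a \<notin> nbhd V E a" using simple_graph_irrefl[OF assms] by (simp add: nbhd_def)
  ultimately show ?thesis by (simp add: closed_nbhd_def degree_def)
qed

lemma closed_nbhd_self: "a \<in> closed_nbhd V E a"
  by (simp add: closed_nbhd_def)

lemma gamma_qtR_le_weight: "is_QTRDF V E f \<Longrightarrow> gamma_qtR V E \<le> weight V f"
  unfolding gamma_qtR_def by (rule Least_le) blast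

locale star_packing =
  fixes V :: "'a set" and E :: "'a \<Rightarrow> 'a \<Rightarrow> bool" and I :: "'i set"
    and c :: "'i \<Rightarrow> 'a" and u :: "'i \<Rightarrow> 'a"
  assumes graph: "simple_graph V E"
    and finite_index: "finite I"
    and leaf_nbhd: "i \<in> I \<Longrightarrow> u i \<in> nbhd V E (c i)"
    and disjoint: "i \<in> I \<Longrightarrow> j \<in> I \<Longrightarrow> i \<noteq> j \<Longrightarrow>
      closed_nbhd V E (c i) \<inter> closed_nbhd V E (c j) = {}"
begin

definition covered :: "'a set" where
  "covered = (\<Union>i\<in>I. closed_nbhd V E (c i))"

definition labelling :: "'a \<Rightarrow> nat" where
  "labelling x = (if x \<in> c ` I then 2 else if x \<in> u ` I then 1 else if x \<in> covered then 0 else 1)"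

lemma leaf_adjacent: "i \<in> I \<Longrightarrow> E (c i) (u i) \<and> u i \<in> V \<and> c i \<in> V \<and> u i \<noteq> c i"
  using leaf_nbhd simple_graph_edge_in[OF graph] simple_graph_irrefl[OF graph]
  by (fastforce simp: nbhd_def)

lemma leaf_in_closed_nbhd: "i \<in> I \<Longrightarrow> u i \<in> closed_nbhd V E (c i)"
  using leaf_nbhd by (simp add: closed_nbhd_def)

lemma closed_nbhd_subset: "i \<in> I \<Longrightarrow> closed_nbhd V E (c i) \<subseteq> V"
  using leaf_adjacent by (auto simp: closed_nbhd_def nbhd_def)

lemma finite_closed_nbhd: "i \<in> I \<Longrightarrow> finite (closed_nbhd V E (c i))"
  using closed_nbhd_subset graph by (meson finite_subset simple_graph_def)

lemma covered_subset: "covered \<subseteq> V"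
  using closed_nbhd_subset by (auto simp: covered_def)

lemma labelling_closed_nbhd:
  assumes i: "i \<in> I" and x: "x \<in> closed_nbhd V E (c i)"
  shows "labelling x = (if x = c i then 2 else if x = u i then 1 else 0)"
proof -
  have "x \<in> c ` I \<longleftrightarrow> x = c i"
    using disjoint[OF i] closed_nbhd_self[where V = V and E = E] x i by blast
  moreover have "x \<in> u ` I \<longleftrightarrow> x = u i"
    using disjoint[OF i] leaf_in_closed_nbhd x i by blast
  moreover have "x \<in> covered" using x i by (auto simp: covered_def)
  ultimately show ?thesis using leaf_adjacent[OF i] by (simp add: labelling_def)
qed

lemma labelling_outside: "x \<notin> covered \<Longrightarrow> labelling x = 1"
  using closed_nbhd_self[where V = V and E = E] leaf_in_closed_nbhd
  by (auto simp: labelling_def covered_def)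

lemma sum_labelling_closed_nbhd:
  assumes i: "i \<in> I"
  shows "sum labelling (closed_nbhd V E (c i)) = 3"
proof -
  let ?C = "closed_nbhd V E (c i)"
  have sub: "{c i, u i} \<subseteq> ?C"
    using closed_nbhd_self[where V = V and E = E] leaf_in_closed_nbhd[OF i] by blast
  have "sum labelling ?C = sum labelling (?C - {c i, u i}) + sum labelling {c i, u i}"
    using sum.subset_diff[OF sub finite_closed_nbhd[OF i]] .
  also have "sum labelling (?C - {c i, u i}) = 0"
    using labelling_closed_nbhd[OF i] by (auto intro!: sum.neutral)
  also have "sum labelling {c i, u i} = labelling (c i) + labelling (u i)"
    using leaf_adjacent[OF i] by (subst sum.insert) auto
  also have "\<dots> = 3"
    using leaf_adjacent[OF i] labelling_closed_nbhd[OF i] sub by simp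
  finally show ?thesis by simp
qed

lemma is_QTRDF_labelling: "is_QTRDF V E labelling"
  unfolding is_QTRDF_def
proof (intro conjI ballI impI)
  fix x assume "x \<in> V" show "labelling x \<le> 2" by (simp add: labelling_def)
next
  fix x assume "x \<in> V" and zero: "labelling x = 0"
  then obtain i where i: "i \<in> I" and x: "x \<in> closed_nbhd V E (c i)"
    using labelling_outside by (fastforce simp: covered_def)
  then have "E (c i) x"
    using zero labelling_closed_nbhd by (fastforce simp: closed_nbhd_def nbhd_def)
  then show "\<exists>y\<in>V. E x y \<and> labelling y = 2"
    using leaf_adjacent[OF i] simple_graph_sym[OF graph] labelling_closed_nbhd[OF i]
      closed_nbhd_self[where V = V and E = E] by fastforce
next
  fix x assume "x \<in> V" and h: "1 \<le> labelling x \<and> (\<forall>y\<in>V. E x y \<longrightarrow> labelling y = 0)"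
  show "labelling x = 1"
  proof (rule ccontr)
    assume "labelling x \<noteq> 1"
    then obtain i where i: "i \<in> I" and "x = c i"
      using h by (auto simp: labelling_def split: if_splits)
    moreover have "labelling (u i) = 1"
      using labelling_closed_nbhd[OF i leaf_in_closed_nbhd[OF i]] leaf_adjacent[OF i] by simp
    ultimately show False using h leaf_adjacent by auto
  qed
qed

lemma card_covered: "card covered = (\<Sum>i\<in>I. degree V E (c i) + 1)"
proof -
  have "card covered = (\<Sum>i\<in>I. card (closed_nbhd V E (c i)))"
    unfolding covered_def
    by (rule card_UN_disjoint[OF finite_index]) (use finite_closed_nbhd disjoint in auto)
  then show ?thesis using card_closed_nbhd[OF graph] by simp
qed

lemma weight_labelling: "weight V labelling + card covered = card V + 3 * card I"
proof -
  have finV: "finite V" using graph by (simp add: simple_graph_def)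
  have "sum labelling covered = (\<Sum>i\<in>I. sum labelling (closed_nbhd V E (c i)))"
    unfolding covered_def
    by (rule sum.UNION_disjoint[OF finite_index]) (use finite_closed_nbhd disjoint in auto)
  then have "sum labelling covered = 3 * card I"
    using sum_labelling_closed_nbhd by simp
  moreover have "sum labelling (V - covered) = card (V - covered)"
    using labelling_outside by simp
  moreover have "weight V labelling = sum labelling (V - covered) + sum labelling covered"
    unfolding weight_def using sum.subset_diff[OF covered_subset finV] .
  moreover have "card (V - covered) + card covered = card V"
    using card_Diff_subset[OF _ covered_subset] card_mono[OF finV covered_subset]
      finite_subset[OF covered_subset finV] by simp
  ultimately show ?thesis by simp
qed

theorem gamma_qtR_bound:
  "gamma_qtR V E + (\<Sum>i\<in>I. degree V E (c i) + 1) \<le> card V + 3 * card I"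
  using gamma_qtR_le_weight[OF is_QTRDF_labelling] weight_labelling card_covered by simp

end

theorem mainTheorem5:
  fixes V :: "'a set" and E :: "'a \<Rightarrow> 'a \<Rightarrow> bool" and q :: nat and v :: "nat \<Rightarrow> 'a"
  assumes "simple_graph V E"
    and "q \<ge> 1"
    and "\<forall>i\<in>{1..q}. v i \<in> V \<and> degree V E (v i) > 2"
    and "\<forall>i\<in>{1..q}. \<forall>j\<in>{1..q}. i \<noteq> j \<longrightarrow> dist_ge V E (v i) (v j) 3"
    and "independent_set E (V - (\<Union>i\<in>{1..q}. closed_nbhd V E (v i)))"
  shows "int (gamma_qtR V E) \<le> int (card V) + 3 * int q - (\<Sum>i=1..q. int (degree V E (v i)) + 1)"
proof -
  define u where "u i = (SOME x. x \<in> nbhd V E (v i))" for i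
  have leaf: "u i \<in> nbhd V E (v i)" if "i \<in> {1..q}" for i
  proof -
    have "nbhd V E (v i) \<noteq> {}" using assms(3) that by (fastforce simp: degree_def)
    then show ?thesis unfolding u_def by (simp add: some_in_eq)
  qed
  interpret star_packing V E "{1..q}" v u
  proof
    fix i j assume "i \<in> {1..q}" "j \<in> {1..q}" "i \<noteq> j"
    then show "closed_nbhd V E (v i) \<inter> closed_nbhd V E (v j) = {}"
      by (intro closed_nbhd_disjoint_if_dist_ge_3 assms(1)) (use assms(3,4) in auto)
  qed (simp_all add: assms(1) leaf)
  have "gamma_qtR V E + (\<Sum>i=1..q. degree V E (v i) + 1) \<le> card V + 3 * q"
    using gamma_qtR_bound by simp
  moreover have "int (\<Sum>i=1..q. degree V E (v i) + 1) = (\<Sum>i=1..q. int (degree V E (v i)) + 1)"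
    by (simp add: add.commute)
  ultimately show ?thesis by linarith
qed

end
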